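(* Let $q,d\ge1$ and $\mathcal{D}=\{(b_{\lambda_1},B_{\lambda_1}),\ldots,(b_{\lambda_d},B_{\lambda_d})\}\subseteq[q]\times2^{[q]}$ with $|B_{\lambda_i}|\ge2$ for all $i$. Let $B$ be a nonempty subset of $[q]$, $b\in{\sf Base}(\mathcal{D})$, and $T_{(b,B)}$ the $\mathcal{D}$-decision tree relative to $(b,B)$. If $b'$ is the label of a good vertex of even height of $T_{(b,B)}$, then $(b',B)\in\overline{\mathcal{D}}$.
   Context: Here $\lambda_1,\dots,\lambda_d$ are $d$ distinct index symbols, ${\sf Base}(\mathcal{D})=\{b_{\lambda_1},\dots,b_{\lambda_d}\}$, and for $b'\in{\sf Base}(\mathcal{D})$, $\nu(b')=\{\lambda_i:i\in[d],\ b_{\lambda_i}=b'\}$. Closure: with $\Lambda=[q]$, $(c,C)^{\sf ex}=\{(c,C'):C\subseteq C'\subseteq\Lambda\}$; $(c,C)\circ(e,E)=(c,(C\smallsetminus\{e\})\cup E)$; $\mathcal{D}^\circ$ is the set of all compositions $(c_1,C_1)\circ\cdots\circ(c_s,C_s)$, $s\ge1$, $(c_i,C_i)\in\mathcal{D}$, with all possible bracketings; $\mathcal{D}^{\sf ex}$ the union of extensions of elements of $\mathcal{D}$; $\Lambda^{\sf triv}=\{(c,C):c\in C\}$; $\overline{\mathcal{D}}=(\mathcal{D}^\circ)^{\sf ex}\cup\Lambda^{\sf triv}$. Decision tree $T_{(b,B)}$: a rooted labeled tree built as follows. The root (height $0$) is labeled $b$. For $k=1,2,\ldots$: every vertex of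 height $2k-2$, with label $b'\in{\sf Base}(\mathcal{D})$, receives one child labeled $\lambda_i$ for each $\lambda_i\in\nu(b')$; then every vertex $v$ of height $2k-1$, with label $\lambda_i$, is treated as follows, where $C(v)$ is the set of labels of the ancestors of $v$ of even height: if $\emptyset\ne B_{\lambda_i}\smallsetminus B\subseteq{\sf Base}(\mathcal{D})\smallsetminus C(v)$, $v$ receives one child labeled $b''$ for each $b''\in B_{\lambda_i}\smallsetminus B$; otherwise $v$ is a leaf. (The process terminates; all leaves have odd height.) Good/bad vertices, defined from the leaves upward: a leaf labeled $\lambda_i$ is good iff $B_{\lambda_i}\subseteq B$; a vertex of even height is good iff at least one of its children is good; a non-leaf vertex of odd height is good iff all its children are good. Vertices that are not good are bad. *)

theory Defs
  imports Main
begin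

text \<open>Ground set [q] = {1..q}. The family D is given by index symbols i in {1..d}
  (playing the role of lambda_i) with base points bD i and sets BD i.\<close>

definition Lam :: "nat \<Rightarrow> nat set" where
  "Lam q = {1..q}"

definition Dfam :: "nat \<Rightarrow> (nat \<Rightarrow> nat) \<Rightarrow> (nat \<Rightarrow> nat set) \<Rightarrow> (nat \<times> nat set) set" where
  "Dfam d bD BD = (\<lambda>i. (bD i, BD i)) ` {1..d}"

definition Base :: "nat \<Rightarrow> (nat \<Rightarrow> nat) \<Rightarrow> nat set" where
  "Base d bD = bD ` {1..d}"

definition nu :: "nat \<Rightarrow> (nat \<Rightarrow> nat) \<Rightarrow> nat \<Rightarrow> nat set" where
  "nu d bD b' = {i \<in> {1..d}. bD i = b'}"

definition comp :: "nat \<times> nat set \<Rightarrow> nat \<times> nat set \<Rightarrow> nat \<times> nat set" where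
  "comp x y = (fst x, (snd x - {fst y}) \<union> snd y)"

inductive_set comp_closure :: "(nat \<times> nat set) set \<Rightarrow> (nat \<times> nat set) set"
  for D :: "(nat \<times> nat set) set" where
  base: "x \<in> D \<Longrightarrow> x \<in> comp_closure D"
| comp: "x \<in> comp_closure D \<Longrightarrow> y \<in> comp_closure D \<Longrightarrow> comp x y \<in> comp_closure D"

definition ext :: "nat set \<Rightarrow> (nat \<times> nat set) set \<Rightarrow> (nat \<times> nat set) set" where
  "ext \<Lambda> S = {(c, C'). \<exists>C. (c, C) \<in> S \<and> C \<subseteq> C' \<and> C' \<subseteq> \<Lambda>}"

definition triv :: "nat set \<Rightarrow> (nat \<times> nat set) set" where
  "triv \<Lambda> = {(c, C). c \<in> C \<and> C \<subseteq> \<Lambda>}"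

definition closure :: "nat \<Rightarrow> (nat \<times> nat set) set \<Rightarrow> (nat \<times> nat set) set" where
  "closure q D = ext (Lam q) (comp_closure D) \<union> triv (Lam q)"

text \<open>A vertex of even height 2k is identified by its path from the root,
  a list [(i1,b1),...,(ik,bk)] of the labels of the odd/even vertices below the root;
  its label is b (root) or bk. A vertex of odd height is a pair (p,i) of its even parent p
  and its label i. C(p,i) is the set of labels of even ancestors of (p,i).\<close>

definition lbl :: "nat \<Rightarrow> (nat \<times> nat) list \<Rightarrow> nat" where
  "lbl b p = (if p = [] then b else snd (last p))"

definition Cset :: "nat \<Rightarrow> (nat \<times> nat) list \<Rightarrow> nat set" where
  "Cset b p = insert b (snd ` set p)"

text \<open>Condition for the odd vertex (p,i) to have children (i.e. not be a leaf).\<close>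
definition expands :: "nat \<Rightarrow> (nat \<Rightarrow> nat) \<Rightarrow> (nat \<Rightarrow> nat set) \<Rightarrow> nat set \<Rightarrow> nat
    \<Rightarrow> (nat \<times> nat) list \<Rightarrow> nat \<Rightarrow> bool" where
  "expands d bD BD B b p i \<longleftrightarrow>
     BD i - B \<noteq> {} \<and> BD i - B \<subseteq> Base d bD - Cset b p"

inductive even_vtx :: "nat \<Rightarrow> (nat \<Rightarrow> nat) \<Rightarrow> (nat \<Rightarrow> nat set) \<Rightarrow> nat set \<Rightarrow> nat
    \<Rightarrow> (nat \<times> nat) list \<Rightarrow> bool"
  for d bD BD B b where
  root: "even_vtx d bD BD B b []"
| step: "even_vtx d bD BD B b p \<Longrightarrow> i \<in> nu d bD (lbl b p) \<Longrightarrow>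
         expands d bD BD B b p i \<Longrightarrow> b'' \<in> BD i - B \<Longrightarrow>
         even_vtx d bD BD B b (p @ [(i, b'')])"

definition odd_vtx :: "nat \<Rightarrow> (nat \<Rightarrow> nat) \<Rightarrow> (nat \<Rightarrow> nat set) \<Rightarrow> nat set \<Rightarrow> nat
    \<Rightarrow> (nat \<times> nat) list \<Rightarrow> nat \<Rightarrow> bool" where
  "odd_vtx d bD BD B b p i \<longleftrightarrow> even_vtx d bD BD B b p \<and> i \<in> nu d bD (lbl b p)"

text \<open>Good vertices (the tree is finite, so the inductive definition coincides
  with the bottom-up definition).\<close>
inductive good_even and good_odd
  for d :: nat and bD :: "nat \<Rightarrow> nat" and BD :: "nat \<Rightarrow> nat set" and B :: "nat set" and b :: nat
  where
  leaf: "odd_vtx d bD BD B b p i \<Longrightarrow> \<not> expands d bD BD B b p i \<Longrightarrow> BD i \<subseteq> B \<Longrightarrow>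
         good_odd d bD BD B b p i"
| node: "odd_vtx d bD BD B b p i \<Longrightarrow> expands d bD BD B b p i \<Longrightarrow>
         (\<forall>b''\<in>BD i - B. good_even d bD BD B b (p @ [(i, b'')])) \<Longrightarrow>
         good_odd d bD BD B b p i"
| even: "even_vtx d bD BD B b p \<Longrightarrow> good_odd d bD BD B b p i \<Longrightarrow>
         good_even d bD BD B b p"

end

theory Submission
  imports Defs
begin

text \<open>Induction from the leaves upward, showing that \<open>(b\<^sub>i, B)\<close> lies in the closure for every
  good odd vertex with label \<open>\<lambda>\<^sub>i\<close>. At a good leaf \<open>B\<^sub>i \<subseteq> B\<close>, so \<open>(b\<^sub>i, B)\<close> extends an element of
  \<open>\<D>\<close>. At a good inner odd vertex every child label \<open>s \<in> B\<^sub>i - B\<close> lies outside \<open>B\<close>, so \<open>(s, B)\<close>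
  is in the closure only as an extension of some composition \<open>(s, C)\<close> with \<open>C \<subseteq> B\<close>;
  composing \<open>(b\<^sub>i, B\<^sub>i)\<close> with these one after the other removes every element outside \<open>B\<close>.
  An even vertex labelled \<open>b'\<close> has only children \<open>\<lambda>\<^sub>i\<close> with \<open>b\<^sub>i = b'\<close>.\<close>

lemma comp_closure_replace_subset:
  assumes "finite S" "(c, X) \<in> comp_closure D"
    and "\<forall>s\<in>S. \<exists>C\<subseteq>B. (s, C) \<in> comp_closure D"
  shows "\<exists>Y. (c, Y) \<in> comp_closure D \<and> Y \<subseteq> (X - S) \<union> B"
  using assms
proof (induction S rule: finite_induct)
  case empty
  then show ?case by blast
next
  case (insert s S)
  then obtain Y where Y: "(c, Y) \<in> comp_closure D" "Y \<subseteq> (X - S) \<union> B" by auto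
  from insert.prems obtain C where C: "C \<subseteq> B" "(s, C) \<in> comp_closure D" by auto
  have "comp (c, Y) (s, C) \<in> comp_closure D"
    using Y(1) C(2) by (rule comp_closure.comp)
  moreover have "comp (c, Y) (s, C) = (c, (Y - {s}) \<union> C)" by (simp add: comp_def)
  moreover have "(Y - {s}) \<union> C \<subseteq> (X - insert s S) \<union> B" using Y(2) C(1) by auto
  ultimately show ?case by auto
qed

lemma comp_closure_reduce_to_subset:
  assumes "(c, X) \<in> comp_closure D" "finite X"
    and "\<forall>s\<in>X - B. \<exists>C\<subseteq>B. (s, C) \<in> comp_closure D"
  shows "\<exists>Y\<subseteq>B. (c, Y) \<in> comp_closure D"
proof -
  obtain Y where "(c, Y) \<in> comp_closure D" "Y \<subseteq> (X - (X - B)) \<union> B"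
    using comp_closure_replace_subset[where S = "X - B" and B = B] assms by blast
  then show ?thesis by blast
qed

lemma closure_if_comp_closure_subset:
  assumes "(c, C) \<in> comp_closure D" "C \<subseteq> B" "B \<subseteq> Lam q"
  shows "(c, B) \<in> closure q D"
  using assms by (auto simp: closure_def ext_def)

lemma comp_closure_subset_if_closure:
  assumes "(s, B) \<in> closure q D" "s \<notin> B"
  shows "\<exists>C\<subseteq>B. (s, C) \<in> comp_closure D"
  using assms by (auto simp: closure_def ext_def triv_def)

lemma Dfam_in_comp_closure:
  "i \<in> {1..d} \<Longrightarrow> (bD i, BD i) \<in> comp_closure (Dfam d bD BD)"
  by (intro comp_closure.base) (auto simp: Dfam_def)

lemma odd_vtx_index:
  assumes "odd_vtx d bD BD B b p i"
  shows "i \<in> {1..d}" and "bD i = lbl b p"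
  using assms by (simp_all add: odd_vtx_def nu_def)

lemma good_vtx_label_in_closure:
  assumes fin: "\<forall>i\<in>{1..d}. finite (BD i)" and B: "B \<subseteq> Lam q"
  shows "good_even d bD BD B b p \<Longrightarrow> (lbl b p, B) \<in> closure q (Dfam d bD BD)"
    and "good_odd d bD BD B b p i \<Longrightarrow> (bD i, B) \<in> closure q (Dfam d bD BD)"
proof (induction rule: good_even_good_odd.inducts)
  case (leaf p i)
  have "(bD i, BD i) \<in> comp_closure (Dfam d bD BD)"
    using leaf(1) by (intro Dfam_in_comp_closure odd_vtx_index)
  then show ?case using leaf(3) B by (rule closure_if_comp_closure_subset)
next
  case (node p i)
  have i: "i \<in> {1..d}" using node(1) by (rule odd_vtx_index)
  have "\<forall>s\<in>BD i - B. \<exists>C\<subseteq>B. (s, C) \<in> comp_closure (Dfam d bD BD)"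
  proof
    fix s assume s: "s \<in> BD i - B"
    then have "(lbl b (p @ [(i, s)]), B) \<in> closure q (Dfam d bD BD)" using node(3) by blast
    then have "(s, B) \<in> closure q (Dfam d bD BD)" by (simp add: lbl_def)
    then show "\<exists>C\<subseteq>B. (s, C) \<in> comp_closure (Dfam d bD BD)"
      using s by (blast intro: comp_closure_subset_if_closure)
  qed
  moreover have "finite (BD i)" using fin i by blast
  ultimately obtain Y where "(bD i, Y) \<in> comp_closure (Dfam d bD BD)" "Y \<subseteq> B"
    using comp_closure_reduce_to_subset[OF Dfam_in_comp_closure[OF i]] by blast
  then show ?case using B by (rule closure_if_comp_closure_subset)
next
  case (even p i)
  from even(2) have "odd_vtx d bD BD B b p i"
    by (cases rule: good_odd.cases) auto
  then have "bD i = lbl b p" by (rule odd_vtx_index)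
  then show ?case using even(3) by simp
qed

theorem lemma3p8:
  fixes q d :: nat and bD :: "nat \<Rightarrow> nat" and BD :: "nat \<Rightarrow> nat set"
    and B :: "nat set" and b :: nat and p :: "(nat \<times> nat) list"
  assumes "q \<ge> 1" and "d \<ge> 1"
    and "\<forall>i\<in>{1..d}. bD i \<in> {1..q} \<and> BD i \<subseteq> {1..q} \<and> card (BD i) \<ge> 2"
    and "B \<noteq> {}" and "B \<subseteq> {1..q}"
    and "b \<in> Base d bD"
    and "good_even d bD BD B b p"
  shows "(lbl b p, B) \<in> closure q (Dfam d bD BD)"
proof -
  have "\<forall>i\<in>{1..d}. finite (BD i)"
    using assms(3) by (metis card.infinite not_numeral_le_zero)
  moreover have "B \<subseteq> Lam q" using assms(5) by (simp add: Lam_def)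
  ultimately show ?thesis using good_vtx_label_in_closure(1) assms(7) by blast
qed

end
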